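(* Let $G$ be a graph, let $m>1$ and let $k$ be a positive integer. Let $S\subseteq V(G)$ be such that there exists an $m$-matching from $S$ to $V(G)\setminus S$. If $G[V(G)\setminus S]$ is a $(k,m)$-expander, then $G$ is a $(k,(m-1)/2)$-expander.
   Context: An $m$-matching from $S$ to $T$ (disjoint vertex sets) is a subgraph $M$ of $G$ in which every $s\in S$ has exactly $m$ neighbors in $T$ and every vertex of $T$ has degree at most $1$. A graph $G$ is a $(k,d)$-expander if $|N_G(X)\setminus X|\ge d|X|$ for every $X\subseteq V(G)$ with $|X|\le k$, where $N_G(X)$ is the set of vertices adjacent to some vertex of $X$. *)

theory Defs
  imports Complex_Main
begin

definition graph :: "'a set \<Rightarrow> ('a \<Rightarrow> 'a \<Rightarrow> bool) \<Rightarrow> bool" where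
  "graph V E \<longleftrightarrow> finite V \<and> (\<forall>u v. E u v \<longrightarrow> u \<in> V \<and> v \<in> V) \<and>
     (\<forall>u v. E u v \<longrightarrow> E v u) \<and> (\<forall>v. \<not> E v v)"

definition nbhd :: "'a set \<Rightarrow> ('a \<Rightarrow> 'a \<Rightarrow> bool) \<Rightarrow> 'a set \<Rightarrow> 'a set" where
  "nbhd V E X = {v \<in> V. \<exists>x \<in> X. E x v}"

definition induced :: "('a \<Rightarrow> 'a \<Rightarrow> bool) \<Rightarrow> 'a set \<Rightarrow> ('a \<Rightarrow> 'a \<Rightarrow> bool)" where
  "induced E W = (\<lambda>u v. E u v \<and> u \<in> W \<and> v \<in> W)"

definition expander :: "'a set \<Rightarrow> ('a \<Rightarrow> 'a \<Rightarrow> bool) \<Rightarrow> nat \<Rightarrow> real \<Rightarrow> bool" where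
  "expander V E k d \<longleftrightarrow>
     (\<forall>X. X \<subseteq> V \<and> card X \<le> k \<longrightarrow> real (card (nbhd V E X - X)) \<ge> d * real (card X))"

definition m_matching ::
  "'a set \<Rightarrow> ('a \<Rightarrow> 'a \<Rightarrow> bool) \<Rightarrow> nat \<Rightarrow> 'a set \<Rightarrow> 'a set \<Rightarrow> ('a \<Rightarrow> 'a \<Rightarrow> bool) \<Rightarrow> bool" where
  "m_matching V E m S T M \<longleftrightarrow>
     (\<forall>u v. M u v \<longrightarrow> E u v) \<and> (\<forall>u v. M u v \<longrightarrow> M v u) \<and>
     (\<forall>s \<in> S. card {t \<in> T. M s t} = m) \<and>
     (\<forall>t \<in> T. card {u \<in> V. M t u} \<le> 1)"

end

theory Submission
  imports Defs
begin

text \<open>Split X into A = X \<inter> S and B = X - S, and let N = N(X) - X.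
  Inside V - S the set B has at least m|B| outside neighbours, all in N.
  The m-matching sends A to m|A| distinct vertices outside S, all neighbours of A;
  at most |B| of them lie in X, so |N| \<ge> m|A| - |B|.  Adding the two bounds gives
  2|N| \<ge> m|A| + (m - 1)|B| \<ge> (m - 1)|X|.\<close>

lemma m_matching_partner_unique:
  assumes "graph V E" "m_matching V E m S T M"
    and "t \<in> T" "M s t" "M s' t"
  shows "s = s'"
proof (rule ccontr)
  assume "s \<noteq> s'"
  have "{s, s'} \<subseteq> {u \<in> V. M t u}"
    using assms unfolding graph_def m_matching_def by blast
  then have "card {s, s'} \<le> card {u \<in> V. M t u}"
    using assms(1) unfolding graph_def by (intro card_mono) auto
  with \<open>s \<noteq> s'\<close> \<open>t \<in> T\<close> assms(2) show False
    unfolding m_matching_def by fastforce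
qed

lemma card_m_matching_partners:
  assumes "graph V E" "m_matching V E m S T M"
    and "A \<subseteq> S" "finite A"
  shows "card (\<Union>s\<in>A. {t \<in> T. M s t}) = m * card A"
proof -
  have "finite {t \<in> T. M s t}" for s
    using assms(1,2) unfolding graph_def m_matching_def
    by (metis (no_types, lifting) mem_Collect_eq rev_finite_subset subsetI)
  moreover have "{t \<in> T. M s t} \<inter> {t \<in> T. M s' t} = {}"
    if "s \<in> A" "s' \<in> A" "s \<noteq> s'" for s s'
    using m_matching_partner_unique[OF assms(1,2)] that by blast
  ultimately have "card (\<Union>s\<in>A. {t \<in> T. M s t}) = (\<Sum>s\<in>A. card {t \<in> T. M s t})"
    using assms(4) by (intro card_UN_disjoint) auto
  also have "\<dots> = m * card A"
    using assms(2,3) unfolding m_matching_def by (simp add: subset_iff)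
  finally show ?thesis .
qed

lemma nbhd_induced_outside_subset:
  assumes "W \<subseteq> V"
  shows "nbhd W (induced E W) (X \<inter> W) - X \<inter> W \<subseteq> nbhd V E X - X"
  using assms unfolding nbhd_def induced_def by auto

lemma card_nbhd_ge_expander_part:
  assumes "graph V E" "W \<subseteq> V" "expander W (induced E W) k d"
    and "X \<subseteq> V" "card X \<le> k"
  shows "d * card (X \<inter> W) \<le> card (nbhd V E X - X)"
proof -
  have fin: "finite V" "finite X" "finite (nbhd V E X - X)"
    using assms(1,4) unfolding graph_def nbhd_def by (auto intro: finite_subset)
  have "card (X \<inter> W) \<le> k"
    using assms(5) fin by (meson card_mono inf_le1 le_trans)
  then have "d * card (X \<inter> W) \<le> card (nbhd W (induced E W) (X \<inter> W) - X \<inter> W)"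
    using assms(3) unfolding expander_def by blast
  also have "\<dots> \<le> card (nbhd V E X - X)"
    using nbhd_induced_outside_subset[OF assms(2)] fin by (simp add: card_mono)
  finally show ?thesis .
qed

lemma card_nbhd_ge_m_matching:
  assumes "graph V E" "m_matching V E m S (V - S) M" "X \<subseteq> V"
  shows "real m * card (X \<inter> S) - card (X - S) \<le> card (nbhd V E X - X)"
proof -
  define U where "U = (\<Union>s\<in>X \<inter> S. {t \<in> V - S. M s t})"
  have fin: "finite V" "finite X" "finite (nbhd V E X - X)"
    using assms(1,3) unfolding graph_def nbhd_def by (auto intro: finite_subset)
  have "U - (X - S) \<subseteq> nbhd V E X - X"
    using assms(2) unfolding U_def m_matching_def nbhd_def by auto
  then have "card U - card (X - S) \<le> card (nbhd V E X - X)"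
    using fin diff_card_le_card_Diff[of "X - S" U] by (meson card_mono finite_Diff le_trans)
  then have "real (card U) - card (X - S) \<le> card (nbhd V E X - X)" by linarith
  then show ?thesis
    using card_m_matching_partners[OF assms(1,2), of "X \<inter> S"] fin unfolding U_def by simp
qed

theorem lemma14:
  fixes V :: "'a set" and E :: "'a \<Rightarrow> 'a \<Rightarrow> bool" and S :: "'a set" and m k :: nat
  assumes "graph V E"
    and "m > 1" and "k > 0"
    and "S \<subseteq> V"
    and "\<exists>M. m_matching V E m S (V - S) M"
    and "expander (V - S) (induced E (V - S)) k (real m)"
  shows "expander V E k ((real m - 1) / 2)"
  unfolding expander_def
proof (intro allI impI)
  fix X assume X: "X \<subseteq> V \<and> card X \<le> k"
  obtain M where M: "m_matching V E m S (V - S) M" using assms(5) by blast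
  have "X \<inter> (V - S) = X - S" using X by blast
  then have outside: "real m * card (X - S) \<le> card (nbhd V E X - X)"
    using card_nbhd_ge_expander_part[OF assms(1) _ assms(6)] X by (metis Diff_subset)
  have matched: "real m * card (X \<inter> S) - card (X - S) \<le> card (nbhd V E X - X)"
    using card_nbhd_ge_m_matching[OF assms(1) M] X by blast
  have "finite X" using X assms(1) unfolding graph_def by (meson finite_subset)
  then have "(real m - 1) / 2 * card X
      = (real m * card (X \<inter> S) - card (X - S) + real m * card (X - S) - card (X \<inter> S)) / 2"
    by (simp add: card_Int_Diff[of X S] field_simps)
  also have "\<dots> \<le> card (nbhd V E X - X)"
    using outside matched by simp
  finally show "(real m - 1) / 2 * card X \<le> card (nbhd V E X - X)" .
qed

end
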